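(* Let $p=1/2$, let $U$ be a utility function with conjugate $V$, and let $y>0$ be such that $\int_{\mathbb R}H(x)\phi(x)\,dx<\infty$, where $H(x)=V\!\left(y\exp(-x/2-1/8)\right)$. Then for every $\varepsilon>0$ there is $M>0$ such that for all $n\in\mathbb N$ $$\sum_{k=0}^nH(z_{n,k})\mathbb 1_{\{H(z_{n,k})>M\}}f_{n,k}<\varepsilon\qquad\text{and}\qquad\sum_{k=0}^n|H(z_{n,k})|\mathbb 1_{\{H(z_{n,k})<-M\}}f_{n,k}<\varepsilon.$$ Consequently $\limsup_{n\to\infty}\sum_{k=0}^nH(z_{n,k})f_{n,k}\le\int_{\mathbb R}H(x)\phi(x)\,dx$.
   Context: A utility function is a function $U:(0,\infty)\to\mathbb R$ that is strictly increasing, strictly concave, smooth, with $\lim_{x\to0}U'(x)=\infty$ and $\lim_{x\to\infty}U'(x)=0$; its conjugate is $V(y)=\sup_{x>0}\{U(x)-xy\}$, $y>0$. $f_{n,k}=\binom nk2^{-n}$, $z_{n,k}=\frac{2k-n}{\sqrt n}$ for $k=0,\dots,n$; $\phi(x)=\frac1{\sqrt{2\pi}}e^{-x^2/2}$. *)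

theory Defs
  imports "HOL-Analysis.Analysis"
begin

definition utility_function :: "(real \<Rightarrow> real) \<Rightarrow> bool" where
  "utility_function U \<longleftrightarrow>
     (\<forall>x y. 0 < x \<longrightarrow> x < y \<longrightarrow> U x < U y) \<and>
     (\<forall>x y t. 0 < x \<longrightarrow> 0 < y \<longrightarrow> x \<noteq> y \<longrightarrow> 0 < t \<longrightarrow> t < 1 \<longrightarrow>
        t * U x + (1 - t) * U y < U (t * x + (1 - t) * y)) \<and>
     (\<forall>k. \<forall>x>0. ((deriv ^^ k) U) differentiable (at x)) \<and>
     filterlim (deriv U) at_top (at_right 0) \<and>
     (deriv U \<longlongrightarrow> 0) at_top"

definition conj_fun :: "(real \<Rightarrow> real) \<Rightarrow> real \<Rightarrow> real" where
  "conj_fun U y = (SUP x\<in>{0<..}. U x - x * y)"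

definition fnk :: "nat \<Rightarrow> nat \<Rightarrow> real" where
  "fnk n k = real (n choose k) / 2 ^ n"

definition znk :: "nat \<Rightarrow> nat \<Rightarrow> real" where
  "znk n k = (2 * real k - real n) / sqrt (real n)"

definition phi :: "real \<Rightarrow> real" where
  "phi x = exp (- (x ^ 2) / 2) / sqrt (2 * pi)"

end

theory Submission
  imports Defs "HOL-Probability.Probability" "HOL-Real_Asymp.Real_Asymp"
begin

(* Comparing consecutive binomial coefficients with the Gaussian weight gives the local bound
   f_{n,k} <= e^13 sqrt (2 pi / n) phi (z_{n,k}), which dominates binomial sums of a nondecreasing
   g >= 0 vanishing on (-oo, 0] by a constant times the integral of g phi (a Riemann sum over the
   cells [z_{n,k}, z_{n,k} + 2/sqrt n)).

   V is antitone and convex, hence continuous, and V z >= U 1 - z; so H is nondecreasing and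
   continuous, and H phi is integrable.  Applied to the upper tail H 1_{H > M} and, after the
   reflection x -> -x, to the lower tail, the Riemann-sum bound controls both tail sums uniformly
   in n by Gaussian tail integrals, which vanish as M -> oo.  For the limsup, the truncation of H
   to [-M, M] is bounded and continuous, so its binomial sums converge to its Gaussian integral by
   the central limit theorem, proved via the characteristic functions cos (t / sqrt n)^n. *)

section \<open>Binomial coefficients against the Gaussian weight\<close>

lemma ln_one_plus_minus_ln_one_minus_ge:
  fixes t :: real
  assumes "0 \<le> t" "t < 1"
  shows "2*t + 2*t^3/3 \<le> ln (1+t) - ln (1-t)"
proof -
  define f where "f u = ln (1+u) - ln (1-u) - 2*u - 2*u^3/3" for u :: real
  have "f 0 \<le> f t"
  proof (rule DERIV_nonneg_imp_increasing_open[of 0 t f])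
    fix x :: real assume x: "0 < x" "x < t"
    have "x^2 < 1" using x assms by (simp add: abs_square_less_1)
    have "DERIV f x :> 1/(1+x) + 1/(1-x) - 2 - 2*x^2"
      unfolding f_def using x assms by (auto intro!: derivative_eq_intros simp: power2_eq_square)
    moreover have "1/(1+x) + 1/(1-x) - 2 - 2*x^2 = 2*x^4/(1-x^2)"
      using x assms \<open>x^2 < 1\<close> by (simp add: divide_simps power2_eq_square power4_eq_xxxx) (simp add: algebra_simps)
    ultimately show "\<exists>y. DERIV f x :> y \<and> 0 \<le> y"
      using \<open>x^2 < 1\<close> by auto
  qed (use assms in \<open>auto simp: f_def intro!: continuous_intros\<close>)
  then show ?thesis by (simp add: f_def)
qed

lemma exp_le_ratio_of_large_gap:
  fixes N m :: real
  assumes N: "1 \<le> N" and m: "0 \<le> m" "m < N + 1" and gap: "12 * N \<le> m^2"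
  shows "exp (2*m/N) * (N + 1 - m) \<le> N + 1 + m"
proof -
  define t where "t = m / (N + 1)"
  have t: "0 \<le> t" "t < 1" and m_eq: "m = t * (N + 1)"
    using m N by (auto simp: t_def field_simps)
  have "(N + 1)^2 \<le> (2 * N)^2" using N by (intro power_mono) auto
  then have "3 * (N + 1)^2 \<le> 12 * N * N" by (simp add: power2_eq_square)
  also have "\<dots> \<le> m^2 * N" using gap N by (intro mult_right_mono) auto
  also have "\<dots> = (t^2 * N) * (N + 1)^2" unfolding m_eq by (simp add: power_mult_distrib)
  finally have "3 * (N + 1)^2 \<le> (t^2 * N) * (N + 1)^2" .
  then have "3 \<le> t^2 * N" using N by simp
  then have "t * 3 \<le> t * (t^2 * N)" using t by (intro mult_left_mono) auto
  then have "t / N \<le> t^3/3" using N by (simp add: field_simps power3_eq_cube power2_eq_square)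
  then have "2*m/N \<le> 2*t + 2*t^3/3"
    using N by (simp add: m_eq field_simps)
  also have "\<dots> \<le> ln (1+t) - ln (1-t)" by (rule ln_one_plus_minus_ln_one_minus_ge[OF t])
  finally have "exp (2*m/N) \<le> exp (ln (1+t) - ln (1-t))" by simp
  also have "\<dots> = (1+t) / (1-t)" using t by (simp add: exp_diff)
  also have "\<dots> = ((N + 1) * (1+t)) / ((N + 1) * (1-t))" using N by simp
  also have "\<dots> = (N + 1 + m) / (N + 1 - m)" by (simp add: m_eq algebra_simps)
  finally show ?thesis using m by (simp add: field_simps)
qed

lemma Suc_mult_binomial_Suc: "Suc k * (n choose Suc k) = (n - k) * (n choose k)"
  by (simp only: binomial_absorption binomial_absorb_comp)

lemma binomial_mult_exp_Suc_le:
  assumes "n \<le> 2*j" "j < n" "12 * real n \<le> (2*real j + 1 - real n)^2"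
  shows "real (n choose Suc j) * exp ((2*real (Suc j) - real n)^2/(2*real n))
     \<le> real (n choose j) * exp ((2*real j - real n)^2/(2*real n))"
proof -
  define m where "m = 2*real j + 1 - real n"
  define e where "e = exp (2*m/real n)"
  have N: "1 \<le> real n" using assms by simp
  have gap: "e * (real n + 1 - m) \<le> real n + 1 + m"
    unfolding e_def using assms N by (intro exp_le_ratio_of_large_gap) (auto simp: m_def)
  have "real n + 1 - m = 2 * real (n - j)" "real n + 1 + m = 2 * real (Suc j)"
    using assms by (auto simp: m_def of_nat_diff)
  then have "e * (2 * real (n - j)) \<le> 2 * real (Suc j)" using gap by (simp only:)
  then have e_le: "e * real (n - j) \<le> real (Suc j)" by simp
  have binom: "real (Suc j) * real (n choose Suc j) = real (n - j) * real (n choose j)"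
    by (metis of_nat_mult Suc_mult_binomial_Suc)
  have "real (Suc j) * (real (n choose Suc j) * e) = e * real (n - j) * real (n choose j)"
    by (simp only: binom mult_ac)
  also have "\<dots> \<le> real (Suc j) * real (n choose j)"
    using e_le by (intro mult_right_mono) auto
  finally have le: "real (n choose Suc j) * e \<le> real (n choose j)"
    by (simp only: mult_le_cancel_left of_nat_0_less_iff zero_less_Suc simp_thms)
  have "(2*real (Suc j) - real n)^2/(2*real n) = 2*m/real n + (2*real j - real n)^2/(2*real n)"
    using N by (simp add: m_def field_simps power2_eq_square)
  then have "exp ((2*real (Suc j) - real n)^2/(2*real n)) = e * exp ((2*real j - real n)^2/(2*real n))"
    by (simp only: e_def exp_add)
  then show ?thesis
    using mult_right_mono[OF le, of "exp ((2*real j - real n)^2/(2*real n))"] by (simp add: mult.assoc)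
qed

(* With binomial_Suc_Suc as a simp rule, simp unfolds central coefficients recursively and diverges. *)
context
  notes binomial_Suc_Suc [simp del]
begin

lemma central_binomial_Suc: "(2 * Suc m) choose Suc m = 2 * (Suc (2*m) choose m)"
proof -
  have "Suc m * ((2 * Suc m) choose Suc m) = Suc m * (2 * (Suc (2*m) choose m))"
    using Suc_times_binomial[of m "Suc (2*m)"] by simp
  then show ?thesis by (simp only: mult_cancel1) simp
qed

lemma Suc_mult_odd_central_binomial: "Suc m * (Suc (2*m) choose m) = Suc (2*m) * ((2*m) choose m)"
proof -
  have "Suc (2*m) choose Suc m = Suc (2*m) choose m"
    using central_binomial_odd[of "Suc (2*m)"] by simp
  then show ?thesis using Suc_times_binomial[of m "2*m"] by simp
qed

lemma central_binomial_sq_le: "real ((2*m) choose m)^2 * (2*real m + 1) \<le> 16^m"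
proof (induction m)
  case 0 then show ?case by simp
next
  case (Suc m)
  define c0 where "c0 = real ((2*m) choose m)"
  define c1 where "c1 = real ((2 * Suc m) choose Suc m)"
  have rec: "c1 * (real m + 1) = 2 * (2*real m + 1) * c0"
    using arg_cong[OF Suc_mult_odd_central_binomial[of m], of real] central_binomial_Suc[of m]
    unfolding c0_def c1_def by (simp add: algebra_simps)
  have "c1^2 * (2*real (Suc m) + 1) * (real m + 1)^2 = (c1 * (real m + 1))^2 * (2*real m + 3)"
    by (simp add: power2_eq_square algebra_simps)
  also have "\<dots> = 4 * (2*real m + 1) * (2*real m + 3) * (c0^2 * (2*real m + 1))"
    unfolding rec by (simp add: power2_eq_square algebra_simps)
  also have "\<dots> \<le> 4 * (2*real m + 1) * (2*real m + 3) * 16^m"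
    using Suc.IH unfolding c0_def by (intro mult_left_mono) auto
  also have "\<dots> \<le> 16 * (real m + 1)^2 * 16^m"
    by (intro mult_right_mono) (auto simp: power2_eq_square algebra_simps)
  finally have "c1^2 * (2*real (Suc m) + 1) * (real m + 1)^2 \<le> 16^Suc m * (real m + 1)^2"
    by (simp add: algebra_simps)
  then show ?case unfolding c1_def by (simp add: mult_le_cancel_right)
qed

lemma binomial_sq_le: "real (n choose k)^2 * (real n + 1) \<le> 4^n"
proof -
  have "real (n choose k)^2 * (real n + 1) \<le> real (n choose (n div 2))^2 * (real n + 1)"
    using binomial_maximum[of n k] by (intro mult_right_mono power_mono) auto
  also have "\<dots> \<le> 4^n"
  proof (cases "even n")
    case True
    then obtain m where n: "n = 2*m" by (rule evenE)
    then show ?thesis using central_binomial_sq_le[of m] by (simp add: power_mult)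
  next
    case False
    define m where "m = n div 2"
    define c where "c = real ((2 * Suc m) choose Suc m)"
    have n: "n = Suc (2*m)" using False unfolding m_def by presburger
    have "real (n choose (n div 2)) = c / 2"
      unfolding c_def central_binomial_Suc using n by simp
    then have "real (n choose (n div 2))^2 * (real n + 1) = (c / 2)^2 * (real n + 1)" by (simp only:)
    also have "\<dots> = c^2 * (2*real (Suc m)) / 4"
      using n by (simp add: power_divide)
    also have "\<dots> \<le> c^2 * (2*real (Suc m) + 1) / 4"
      by (intro divide_right_mono mult_left_mono) auto
    also have "\<dots> \<le> 16^Suc m / 4"
      unfolding c_def by (intro divide_right_mono central_binomial_sq_le) auto
    also have "\<dots> = 4^n"
    proof -
      have "(4::real)^n = 4 * 4^(2*m)" using n by simp
      then show ?thesis by (simp add: power_mult)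
    qed
    finally show ?thesis .
  qed
  finally show ?thesis .
qed

end

lemma binomial_le_two_pow_div_sqrt:
  assumes "1 \<le> n"
  shows "real (n choose k) \<le> 2^n / sqrt (real n)"
proof (rule power2_le_imp_le)
  have "real (n choose k)^2 * real n \<le> real (n choose k)^2 * (real n + 1)"
    by (intro mult_left_mono) auto
  also have "\<dots> \<le> 4^n" by (rule binomial_sq_le)
  also have "\<dots> = (2^n / sqrt (real n))^2 * real n"
    using assms by (simp add: power_divide power2_eq_square flip: power_mult_distrib)
  finally show "real (n choose k)^2 \<le> (2^n / sqrt (real n))^2"
    using assms by simp
qed simp

(* Up to (2k - n)^2 = 26 n the exponential factor is at most e^13; beyond, the weights
   C(n,k) e^((2k-n)^2/(2n)) decrease in k. *)
lemma binomial_mult_exp_le: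
  assumes n: "1 \<le> n" and "n \<le> 2*k" "k \<le> n"
  shows "real (n choose k) * exp ((2*real k - real n)^2/(2*real n)) \<le> exp 13 * 2^n / sqrt (real n)"
  using assms(2,3)
proof (induction k)
  case 0
  then show ?case using n by simp
next
  case (Suc j)
  define d where "d = 2*real (Suc j) - real n"
  have d0: "0 \<le> d" using Suc.prems by (simp add: d_def)
  show ?case
  proof (cases "d^2 \<le> 26 * real n")
    case True
    then have "exp ((2*real (Suc j) - real n)^2/(2*real n)) \<le> exp 13"
      using n by (simp add: d_def field_simps)
    with binomial_le_two_pow_div_sqrt[OF n, of "Suc j"]
    have "real (n choose Suc j) * exp ((2*real (Suc j) - real n)^2/(2*real n)) \<le> 2^n / sqrt (real n) * exp 13"
      by (intro mult_mono) auto
    then show ?thesis by (simp add: mult.commute times_divide_eq_left)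
  next
    case False
    have "2 \<le> d"
    proof (rule ccontr)
      assume "\<not> 2 \<le> d"
      then have "d^2 \<le> 2^2" using d0 by (intro power_mono) auto
      with False n show False by simp
    qed
    then have j: "n \<le> 2*j" by (simp add: d_def)
    have "d^2 \<le> 2 * (d - 1)^2 + 2"
      using zero_le_power2[of "d - 2"] by (simp add: power2_eq_square algebra_simps)
    with False n have "12 * real n \<le> (d - 1)^2" by simp
    moreover have "d - 1 = 2*real j + 1 - real n" by (simp add: d_def)
    ultimately have "12 * real n \<le> (2*real j + 1 - real n)^2" by simp
    with j Suc.prems have "real (n choose Suc j) * exp ((2*real (Suc j) - real n)^2/(2*real n))
        \<le> real (n choose j) * exp ((2*real j - real n)^2/(2*real n))"
      by (intro binomial_mult_exp_Suc_le) auto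
    also have "\<dots> \<le> exp 13 * 2^n / sqrt (real n)" using Suc.IH j Suc.prems by simp
    finally show ?thesis .
  qed
qed

lemma fnk_le_phi:
  assumes n: "1 \<le> n" and k: "k \<le> n"
  shows "fnk n k \<le> exp 13 * sqrt (2*pi) / sqrt (real n) * phi (znk n k)"
proof -
  have gauss: "real (n choose k) * exp ((2*real k - real n)^2/(2*real n)) \<le> exp 13 * 2^n / sqrt (real n)"
  proof (cases "n \<le> 2*k")
    case True
    then show ?thesis using binomial_mult_exp_le[OF n _ k] by blast
  next
    case False
    have "(2*real (n-k) - real n)^2 = (2*real k - real n)^2"
      using k by (simp add: of_nat_diff power2_eq_square algebra_simps)
    then show ?thesis
      using binomial_mult_exp_le[OF n, of "n-k"] False binomial_symmetric[OF k] by auto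
  qed
  have z: "(znk n k)^2 / 2 = (2*real k - real n)^2/(2*real n)"
    using n by (simp add: znk_def power_divide)
  have "fnk n k = real (n choose k) * exp ((2*real k - real n)^2/(2*real n)) / 2^n
      * exp (- ((znk n k)^2 / 2))"
    unfolding fnk_def z by (simp add: exp_minus field_simps)
  also have "\<dots> \<le> exp 13 * 2^n / sqrt (real n) / 2^n * exp (- ((znk n k)^2 / 2))"
    using gauss by (intro mult_right_mono divide_right_mono) auto
  also have "\<dots> = exp 13 * sqrt (2*pi) / sqrt (real n) * phi (znk n k)"
    by (simp add: phi_def)
  finally show ?thesis .
qed

section \<open>Binomial sums as Riemann sums against the Gaussian density\<close>

lemma phi_pos: "0 < phi x"
  by (simp add: phi_def)

lemma phi_minus: "phi (- x) = phi x"
  by (simp add: phi_def)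

lemma phi_eq_std_normal_density: "phi = std_normal_density"
  by (simp add: fun_eq_iff phi_def std_normal_density_def)

lemma integrable_phi: "integrable lborel phi"
  by (simp add: phi_eq_std_normal_density)

lemma phi_le_exp_mult:
  assumes "x^2 \<le> z^2 + 2*c"
  shows "phi z \<le> exp c * phi x"
proof -
  have "exp (- (z^2) / 2) \<le> exp c * exp (- (x^2) / 2)"
    using assms by (simp flip: exp_add)
  from divide_right_mono[OF this, of "sqrt (2*pi)"] show ?thesis
    by (simp add: phi_def)
qed

lemma znk_Suc: "znk n (Suc k) = znk n k + 2 / sqrt (real n)"
  by (simp add: znk_def add_divide_distrib [symmetric] algebra_simps)

lemma znk_mono: "k \<le> l \<Longrightarrow> znk n k \<le> znk n l"
  by (simp add: znk_def divide_right_mono)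

lemma znk_le_sqrt: "k \<le> n \<Longrightarrow> znk n k \<le> sqrt (real n)"
  using divide_right_mono[of "2 * real k - real n" "real n" "sqrt (real n)"]
  by (simp add: znk_def real_div_sqrt)

lemma sum_indicator_znk_cells_le_1:
  assumes n: "1 \<le> n"
  shows "(\<Sum>k\<le>n. indicator {znk n k ..< znk n k + 2 / sqrt (real n)} x) \<le> (1::real)"
proof -
  define S where "S = {k. x \<in> {znk n k ..< znk n k + 2 / sqrt (real n)}}"
  have disjoint: False if "k < l" "k \<in> S" "l \<in> S" for k l
    using that znk_mono[of "Suc k" l n] by (auto simp: S_def znk_Suc)
  have "(\<Sum>k\<le>n. indicator {znk n k ..< znk n k + 2 / sqrt (real n)} x) = real (card ({..n} \<inter> S))"
    by (simp add: S_def indicator_def sum.If_cases Int_def)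
  also have "card ({..n} \<inter> S) \<le> 1"
    using disjoint by (auto simp: card_le_Suc0_iff_eq) (metis linorder_cases)
  finally show ?thesis by simp
qed

(* On the cell [z, z + d) the density phi drops by at most the factor e^4, and g only grows. *)
lemma mult_phi_le_cell_integral:
  assumes mono: "mono g" and g0: "\<And>x. 0 \<le> g x" and int: "integrable lborel (\<lambda>x. g x * phi x)"
    and z: "0 \<le> z" and d: "0 < d" "z * d \<le> 2" "d^2 \<le> 4"
  shows "d * (g z * phi z) \<le> exp 4 * (\<integral>x. indicator {z..<z+d} x * (g x * phi x) \<partial>lborel)"
proof -
  have pointwise: "indicator {z..<z+d} x * (g z * phi z) \<le> exp 4 * (indicator {z..<z+d} x * (g x * phi x))" for x
  proof (cases "z \<le> x \<and> x < z + d")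
    case True
    then have "x^2 \<le> z^2 + 2*4"
      using z d power_mono[of x "z + d" 2] by (auto simp: power2_eq_square algebra_simps)
    then have "phi z \<le> exp 4 * phi x" by (rule phi_le_exp_mult)
    moreover have "g z \<le> g x" using True mono by (auto dest: monoD)
    ultimately have "g z * phi z \<le> g x * (exp 4 * phi x)"
      using g0 phi_pos[of z] by (intro mult_mono) (auto simp: less_imp_le)
    then show ?thesis using True by (simp add: mult_ac)
  qed simp
  have "d * (g z * phi z) = (\<integral>x. indicator {z..<z+d} x * (g z * phi z) \<partial>lborel)"
    using d by simp
  also have "\<dots> \<le> (\<integral>x. exp 4 * (indicator {z..<z+d} x * (g x * phi x)) \<partial>lborel)"
  proof (intro integral_mono pointwise integrable_mult_right)
    show "integrable lborel (\<lambda>x. indicator {z..<z+d} x * (g x * phi x))"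
      using integrable_mult_indicator[OF _ int, of "{z..<z+d}"] by simp
    show "integrable lborel (\<lambda>x. indicator {z..<z+d} x * (g z * phi z))"
      using d by (intro integrable_mult_left) simp
  qed
  also have "\<dots> = exp 4 * (\<integral>x. indicator {z..<z+d} x * (g x * phi x) \<partial>lborel)" by simp
  finally show ?thesis .
qed

lemma fnk_mult_le_cell_integral:
  assumes mono: "mono g" and g0: "\<And>x. 0 \<le> g x" and g_nonpos: "\<And>x. x \<le> 0 \<Longrightarrow> g x = 0"
    and int: "integrable lborel (\<lambda>x. g x * phi x)" and n: "1 \<le> n" and k: "k \<le> n"
  shows "g (znk n k) * fnk n k
    \<le> exp 17 * sqrt (2*pi) * (\<integral>x. indicator {znk n k ..< znk n k + 2 / sqrt (real n)} x * (g x * phi x) \<partial>lborel)"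
    (is "_ \<le> _ * ?J")
proof -
  define z where "z = znk n k"
  define d where "d = 2 / sqrt (real n)"
  have J0: "0 \<le> ?J"
    using g0 phi_pos by (intro integral_nonneg_AE AE_I2) (auto simp: indicator_def less_imp_le)
  show ?thesis
  proof (cases "0 < z")
    case False
    then show ?thesis using g_nonpos[of z] J0 by (simp add: z_def)
  next
    case True
    have "0 < d" "d^2 \<le> 4" "z * d \<le> 2"
      using n znk_le_sqrt[OF k] by (auto simp: d_def z_def power_divide field_simps)
    with True have cell: "d * (g z * phi z) \<le> exp 4 * ?J"
      using mult_phi_le_cell_integral[OF mono g0 int, of z d] by (simp add: z_def d_def)
    have "g z * fnk n k \<le> g z * (exp 13 * sqrt (2*pi) / sqrt (real n) * phi z)"
      using fnk_le_phi[OF n k] g0 by (intro mult_left_mono) (auto simp: z_def)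
    also have "\<dots> = exp 13 * sqrt (2*pi) / 2 * (d * (g z * phi z))"
      by (simp add: d_def)
    also have "\<dots> \<le> exp 13 * sqrt (2*pi) / 2 * (exp 4 * ?J)"
      using cell by (intro mult_left_mono) auto
    also have "\<dots> = exp 17 * sqrt (2*pi) / 2 * ?J"
      by (simp add: mult_exp_exp)
    also have "\<dots> \<le> exp 17 * sqrt (2*pi) * ?J"
      using J0 by (intro mult_right_mono) auto
    finally show ?thesis by (simp add: z_def)
  qed
qed

lemma binomial_sum_le_gaussian_integral:
  assumes mono: "mono g" and g0: "\<And>x. 0 \<le> g x" and g_nonpos: "\<And>x. x \<le> 0 \<Longrightarrow> g x = 0"
    and int: "integrable lborel (\<lambda>x. g x * phi x)" and n: "1 \<le> n"
  shows "(\<Sum>k\<le>n. g (znk n k) * fnk n k) \<le> exp 17 * sqrt (2*pi) * (\<integral>x. g x * phi x \<partial>lborel)"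
proof -
  define J where "J k x = indicator {znk n k ..< znk n k + 2 / sqrt (real n)} x * (g x * phi x)" for k x
  have intJ: "integrable lborel (J k)" for k
    unfolding J_def using integrable_mult_indicator[OF _ int] by simp
  have "(\<Sum>k\<le>n. g (znk n k) * fnk n k) \<le> (\<Sum>k\<le>n. exp 17 * sqrt (2*pi) * (\<integral>x. J k x \<partial>lborel))"
    unfolding J_def using fnk_mult_le_cell_integral[OF mono g0 g_nonpos int n] by (intro sum_mono) auto
  also have "\<dots> = exp 17 * sqrt (2*pi) * (\<integral>x. (\<Sum>k\<le>n. J k x) \<partial>lborel)"
    using intJ by (simp add: sum_distrib_left)
  also have "\<dots> \<le> exp 17 * sqrt (2*pi) * (\<integral>x. g x * phi x \<partial>lborel)"
  proof (intro mult_left_mono integral_mono int)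
    show "integrable lborel (\<lambda>x. \<Sum>k\<le>n. J k x)" using intJ by simp
    fix x
    have "(\<Sum>k\<le>n. J k x) = (\<Sum>k\<le>n. indicator {znk n k ..< znk n k + 2 / sqrt (real n)} x) * (g x * phi x)"
      by (simp add: J_def sum_distrib_right)
    also have "\<dots> \<le> 1 * (g x * phi x)"
      using sum_indicator_znk_cells_le_1[OF n] g0[of x] phi_pos[of x] by (intro mult_right_mono) auto
    finally show "(\<Sum>k\<le>n. J k x) \<le> g x * phi x" by simp
  qed auto
  finally show ?thesis .
qed

section \<open>The central limit theorem for the symmetric binomial distribution\<close>

lemma cos_div_sqrt_power_tendsto: "(\<lambda>n. cos (t / sqrt (real n)) ^ n) \<longlonglongrightarrow> exp (- (t^2) / 2)"
proof (cases "t = 0")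
  case False
  then have "0 < \<bar>t\<bar>" by simp
  then have "(\<lambda>n. cos (\<bar>t\<bar> / sqrt (real n)) ^ n) \<longlonglongrightarrow> exp (- (\<bar>t\<bar> * \<bar>t\<bar> / 2))"
    by real_asymp
  moreover have "cos (\<bar>t\<bar> / sqrt (real n)) = cos (t / sqrt (real n))" for n
    by (cases "0 \<le> t") simp_all
  ultimately show ?thesis by (simp add: power2_eq_square)
qed simp

definition scaled_binomial :: "nat \<Rightarrow> real measure" where
  "scaled_binomial n = distr (measure_pmf (binomial_pmf n (1/2))) borel (znk n)"

lemma real_distribution_scaled_binomial: "real_distribution (scaled_binomial n)"
  unfolding scaled_binomial_def real_distribution_def real_distribution_axioms_def
  by (auto intro!: measure_pmf.prob_space_distr)

lemma integral_scaled_binomial: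
  fixes f :: "real \<Rightarrow> 'b::{banach, second_countable_topology}"
  assumes [measurable]: "f \<in> borel_measurable borel"
  shows "integral\<^sup>L (scaled_binomial n) f = (\<Sum>k\<le>n. fnk n k *\<^sub>R f (znk n k))"
proof -
  have "integral\<^sup>L (scaled_binomial n) f = measure_pmf.expectation (binomial_pmf n (1/2)) (\<lambda>k. f (znk n k))"
    unfolding scaled_binomial_def by (rule integral_distr) auto
  also have "\<dots> = (\<Sum>k\<le>n. (real (n choose k) * (1/2) ^ k * (1 - 1/2) ^ (n - k)) *\<^sub>R f (znk n k))"
    by (rule expectation_binomial_pmf') auto
  also have "\<dots> = (\<Sum>k\<le>n. fnk n k *\<^sub>R f (znk n k))"
    by (intro sum.cong refl) (simp add: fnk_def power_add [symmetric] power_one_over)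
  finally show ?thesis .
qed

lemma char_scaled_binomial:
  assumes "1 \<le> n"
  shows "char (scaled_binomial n) t = complex_of_real (cos (t / sqrt (real n)) ^ n)"
proof -
  define s where "s = t / sqrt (real n)"
  have "char (scaled_binomial n) t = (\<Sum>k\<le>n. fnk n k *\<^sub>R iexp (t * znk n k))"
    unfolding char_def by (rule integral_scaled_binomial) measurable
  also have "\<dots> = (\<Sum>k\<le>n. of_nat (n choose k) * cis s ^ k * cis (-s) ^ (n-k)) / 2^n"
    unfolding sum_divide_distrib
  proof (intro sum.cong refl)
    fix k assume "k \<in> {..n}"
    then have "t * znk n k = real k * s + real (n-k) * (-s)"
      using assms by (simp add: znk_def s_def of_nat_diff field_simps)
    then have "iexp (t * znk n k) = cis (real k * s + real (n-k) * (-s))"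
      by (simp add: cis_conv_exp)
    then have "iexp (t * znk n k) = cis (real k * s) * cis (real (n-k) * (-s))"
      by (simp only: cis_mult)
    then have "iexp (t * znk n k) = cis s ^ k * cis (-s) ^ (n-k)"
      by (simp only: Complex.DeMoivre)
    then show "fnk n k *\<^sub>R iexp (t * znk n k) = of_nat (n choose k) * cis s ^ k * cis (-s) ^ (n-k) / 2^n"
      by (simp add: fnk_def scaleR_conv_of_real field_simps)
  qed
  also have "\<dots> = (cis s + cis (-s))^n / 2^n"
    by (subst binomial_ring) (simp add: atLeast0AtMost)
  also have "cis s + cis (-s) = 2 * complex_of_real (cos s)"
    by (simp add: complex_eq_iff)
  finally show ?thesis by (simp add: s_def power_mult_distrib)
qed

lemma weak_conv_scaled_binomial: "weak_conv_m scaled_binomial std_normal_distribution"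
proof (rule levy_continuity[OF real_distribution_scaled_binomial real_dist_normal_dist])
  fix t
  have "eventually (\<lambda>n. complex_of_real (cos (t / sqrt (real n)) ^ n) = char (scaled_binomial n) t) sequentially"
    using eventually_ge_at_top[of 1] by eventually_elim (simp add: char_scaled_binomial)
  with tendsto_of_real[OF cos_div_sqrt_power_tendsto]
  show "(\<lambda>n. char (scaled_binomial n) t) \<longlonglongrightarrow> char std_normal_distribution t"
    unfolding char_std_normal_distribution by (rule Lim_transform_eventually)
qed

lemma binomial_sum_tendsto_gaussian_integral:
  fixes g :: "real \<Rightarrow> real"
  assumes cont: "continuous_on UNIV g" and bdd: "\<And>x. \<bar>g x\<bar> \<le> B"
  shows "(\<lambda>n. \<Sum>k\<le>n. g (znk n k) * fnk n k) \<longlonglongrightarrow> (\<integral>x. g x * phi x \<partial>lborel)"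
proof -
  have [measurable]: "g \<in> borel_measurable borel"
    using cont by (rule borel_measurable_continuous_onI)
  have "(\<lambda>n. integral\<^sup>L (scaled_binomial n) g) \<longlonglongrightarrow> integral\<^sup>L std_normal_distribution g"
    using cont bdd continuous_on_eq_continuous_at[of UNIV g]
    by (intro weak_conv_imp_integral_bdd_continuous_conv[OF real_distribution_scaled_binomial
          real_dist_normal_dist weak_conv_scaled_binomial]) auto
  moreover have "integral\<^sup>L (scaled_binomial n) g = (\<Sum>k\<le>n. g (znk n k) * fnk n k)" for n
    by (simp add: integral_scaled_binomial mult.commute)
  moreover have "integral\<^sup>L std_normal_distribution g = (\<integral>x. g x * phi x \<partial>lborel)"
    by (simp add: integral_density phi_eq_std_normal_density mult.commute)
  ultimately show ?thesis by simp
qed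

section \<open>Tails of nondecreasing functions\<close>

definition upper_tail :: "(real \<Rightarrow> real) \<Rightarrow> real \<Rightarrow> real \<Rightarrow> real" where
  "upper_tail H M x = (if M < H x then H x else 0)"

lemma borel_measurable_upper_tail:
  assumes [measurable]: "H \<in> borel_measurable borel"
  shows "upper_tail H M \<in> borel_measurable borel"
  unfolding upper_tail_def by measurable

lemma integrable_upper_tail_mult_phi:
  assumes [measurable]: "H \<in> borel_measurable borel" and int: "integrable lborel (\<lambda>x. H x * phi x)"
  shows "integrable lborel (\<lambda>x. upper_tail H M x * phi x)"
proof (rule Bochner_Integration.integrable_bound[OF integrable_abs[OF int]])
  show "(\<lambda>x. upper_tail H M x * phi x) \<in> borel_measurable lborel"
    using borel_measurable_upper_tail[of H M] unfolding phi_def by measurable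
qed (auto simp: upper_tail_def abs_mult)

lemma upper_tail_integral_tendsto_0:
  assumes [measurable]: "H \<in> borel_measurable borel" and int: "integrable lborel (\<lambda>x. H x * phi x)"
  shows "((\<lambda>M. \<integral>x. upper_tail H M x * phi x \<partial>lborel) \<longlongrightarrow> 0) at_top"
proof -
  have "((\<lambda>M. \<integral>x. upper_tail H M x * phi x \<partial>lborel) \<longlongrightarrow> (\<integral>(x::real). 0 \<partial>lborel)) at_top"
  proof (rule Bochner_Integration.integral_dominated_convergence_at_top[where s = "\<lambda>M x. upper_tail H M x * phi x"
        and f = "\<lambda>x. 0" and M = lborel and w = "\<lambda>x. \<bar>H x * phi x\<bar>"])
    show "(\<lambda>x. upper_tail H M x * phi x) \<in> borel_measurable lborel" for M
      using borel_measurable_upper_tail[of H M] unfolding phi_def by measurable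
    show "AE x in lborel. ((\<lambda>M. upper_tail H M x * phi x) \<longlongrightarrow> 0) at_top"
    proof (intro AE_I2 tendsto_eventually)
      fix x
      show "\<forall>\<^sub>F M in at_top. upper_tail H M x * phi x = 0"
        using eventually_ge_at_top[of "H x"] by eventually_elim (simp add: upper_tail_def)
    qed
    show "\<forall>\<^sub>F M in at_top. AE x in lborel. norm (upper_tail H M x * phi x) \<le> \<bar>H x * phi x\<bar>"
      by (auto simp: upper_tail_def abs_mult)
  qed (use int in auto)
  then show ?thesis by simp
qed

lemma upper_tail_sum_le_integral:
  assumes mono: "mono H" and int: "integrable lborel (\<lambda>x. H x * phi x)"
    and M: "0 \<le> M" "H 0 \<le> M" and n: "1 \<le> n"
  shows "(\<Sum>k\<le>n. upper_tail H M (znk n k) * fnk n k)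
    \<le> exp 17 * sqrt (2*pi) * (\<integral>x. upper_tail H M x * phi x \<partial>lborel)"
proof (rule binomial_sum_le_gaussian_integral)
  show "mono (upper_tail H M)"
    using mono M by (fastforce simp: upper_tail_def mono_def)
  show "x \<le> 0 \<Longrightarrow> upper_tail H M x = 0" for x
    using mono M by (auto simp: upper_tail_def dest: monoD[of H x 0])
  show "integrable lborel (\<lambda>x. upper_tail H M x * phi x)"
    using borel_measurable_mono[OF mono] int by (rule integrable_upper_tail_mult_phi)
qed (use M n in \<open>auto simp: upper_tail_def\<close>)

lemma eventually_upper_tail_sums_less:
  assumes mono: "mono H" and int: "integrable lborel (\<lambda>x. H x * phi x)" and "0 < \<epsilon>"
  shows "\<forall>\<^sub>F M in at_top. \<forall>n\<ge>1. (\<Sum>k\<le>n. upper_tail H M (znk n k) * fnk n k) < \<epsilon>"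
proof -
  have "((\<lambda>M. exp 17 * sqrt (2*pi) * (\<integral>x. upper_tail H M x * phi x \<partial>lborel)) \<longlongrightarrow> 0) at_top"
    using tendsto_mult_right_zero[OF upper_tail_integral_tendsto_0[OF borel_measurable_mono[OF mono] int]] .
  then have "\<forall>\<^sub>F M in at_top. exp 17 * sqrt (2*pi) * (\<integral>x. upper_tail H M x * phi x \<partial>lborel) < \<epsilon>"
    using \<open>0 < \<epsilon>\<close> by (rule order_tendstoD)
  with eventually_ge_at_top[of "max 0 (H 0)"]
  show ?thesis
    by eventually_elim (use upper_tail_sum_le_integral[OF mono int] in \<open>fastforce\<close>)
qed

lemma sum_fnk_reflect: "(\<Sum>k\<le>n. g (- znk n k) * fnk n k) = (\<Sum>k\<le>n. g (znk n k) * fnk n k)"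
proof -
  have "(\<Sum>k\<le>n. g (- znk n k) * fnk n k) = (\<Sum>k\<le>n. g (znk n (n - k)) * fnk n (n - k))"
    by (intro sum.cong refl)
      (simp add: znk_def fnk_def of_nat_diff minus_divide_left binomial_symmetric[symmetric])
  also have "\<dots> = (\<Sum>k\<le>n. g (znk n k) * fnk n k)"
    using sum.atLeastAtMost_rev[of "\<lambda>k. g (znk n k) * fnk n k" 0 n] by (simp add: atLeast0AtMost)
  finally show ?thesis .
qed

lemma integrable_reflect_mult_phi:
  "integrable lborel (\<lambda>x. g (- x) * phi x) \<longleftrightarrow> integrable lborel (\<lambda>x. g x * phi x)"
  using lborel_integrable_real_affine_iff[of "-1" "\<lambda>x. g x * phi x" 0] by (simp add: phi_minus)

lemma integral_reflect_mult_phi: "(\<integral>x. g (- x) * phi x \<partial>lborel) = (\<integral>x. g x * phi x \<partial>lborel)"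
  using lborel_integral_real_affine[of "-1" "\<lambda>x. g x * phi x" 0] by (simp add: phi_minus)

lemma lower_tail_eq_upper_tail_reflect:
  "0 \<le> M \<Longrightarrow> (if H x < - M then \<bar>H x\<bar> else 0) = upper_tail (\<lambda>u. - H (- u)) M (- x)"
  by (simp add: upper_tail_def)

lemma mono_reflect:
  fixes H :: "real \<Rightarrow> real"
  shows "mono H \<Longrightarrow> mono (\<lambda>u. - H (- u))"
  by (simp add: mono_def)

lemma eventually_lower_tail_sums_less:
  assumes mono: "mono H" and int: "integrable lborel (\<lambda>x. H x * phi x)" and "0 < \<epsilon>"
  shows "\<forall>\<^sub>F M in at_top. \<forall>n\<ge>1.
    (\<Sum>k\<le>n. (if H (znk n k) < - M then \<bar>H (znk n k)\<bar> else 0) * fnk n k) < \<epsilon>"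
proof -
  define R where "R = (\<lambda>u. - H (- u))"
  have "integrable lborel (\<lambda>x. R x * phi x)"
    using int integrable_reflect_mult_phi[of H] by (simp add: R_def)
  then have upper: "\<forall>\<^sub>F M in at_top. \<forall>n\<ge>1. (\<Sum>k\<le>n. upper_tail R M (znk n k) * fnk n k) < \<epsilon>"
    using mono_reflect[OF mono] \<open>0 < \<epsilon>\<close> unfolding R_def by (intro eventually_upper_tail_sums_less)
  have lower_eq: "(\<Sum>k\<le>n. (if H (znk n k) < - M then \<bar>H (znk n k)\<bar> else 0) * fnk n k)
      = (\<Sum>k\<le>n. upper_tail R M (znk n k) * fnk n k)" if "0 \<le> M" for M n
    using sum_fnk_reflect[of "upper_tail R M" n] that
    by (simp add: lower_tail_eq_upper_tail_reflect flip: R_def)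
  show ?thesis
    using upper eventually_ge_at_top[of "0::real"] by eventually_elim (simp add: lower_eq)
qed

lemma integral_truncation_le:
  assumes mono: "mono H" and int: "integrable lborel (\<lambda>x. H x * phi x)" and "0 \<le> M"
  shows "(\<integral>x. max (- M) (min M (H x)) * phi x \<partial>lborel)
    \<le> (\<integral>x. H x * phi x \<partial>lborel) + (\<integral>x. upper_tail (\<lambda>u. - H (- u)) M x * phi x \<partial>lborel)"
proof -
  define R where "R = (\<lambda>u. - H (- u))"
  have [measurable]: "H \<in> borel_measurable borel" "R \<in> borel_measurable borel"
    using borel_measurable_mono mono mono_reflect unfolding R_def by blast+
  have intR: "integrable lborel (\<lambda>x. upper_tail R M (- x) * phi x)"
    using int integrable_reflect_mult_phi[of H] integrable_reflect_mult_phi[of "upper_tail R M"]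
      integrable_upper_tail_mult_phi[of R]
    by (simp add: R_def)
  have "(\<integral>x. max (- M) (min M (H x)) * phi x \<partial>lborel) \<le> (\<integral>x. H x * phi x + upper_tail R M (- x) * phi x \<partial>lborel)"
  proof (rule integral_mono)
    have "AE x in lborel. norm (max (- M) (min M (H x)) * phi x) \<le> norm (M * phi x)"
      using \<open>0 \<le> M\<close> phi_pos by (intro AE_I2) (auto simp: abs_mult intro!: mult_right_mono)
    then show "integrable lborel (\<lambda>x. max (- M) (min M (H x)) * phi x)"
      by (intro Bochner_Integration.integrable_bound[OF integrable_mult_right[OF integrable_phi]])
        (auto simp: phi_def)
    show "integrable lborel (\<lambda>x. H x * phi x + upper_tail R M (- x) * phi x)"
      using int intR by simp
    show "max (- M) (min M (H x)) * phi x \<le> H x * phi x + upper_tail R M (- x) * phi x" for x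
    proof -
      have "max (- M) (min M (H x)) \<le> H x + upper_tail R M (- x)"
        using \<open>0 \<le> M\<close> by (auto simp: R_def upper_tail_def)
      from mult_right_mono[OF this less_imp_le[OF phi_pos[of x]]] show ?thesis
        by (simp add: distrib_right)
    qed
  qed
  also have "\<dots> = (\<integral>x. H x * phi x \<partial>lborel) + (\<integral>x. upper_tail R M x * phi x \<partial>lborel)"
    using int intR by (simp add: integral_reflect_mult_phi)
  finally show ?thesis by (simp add: R_def)
qed

lemma limsup_binomial_sum_le_truncation:
  assumes cont: "continuous_on UNIV H" and "0 \<le> M"
    and tail: "\<And>n. 1 \<le> n \<Longrightarrow> (\<Sum>k\<le>n. upper_tail H M (znk n k) * fnk n k) \<le> c"
  shows "limsup (\<lambda>n. ereal (\<Sum>k\<le>n. H (znk n k) * fnk n k))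
    \<le> ereal ((\<integral>x. max (- M) (min M (H x)) * phi x \<partial>lborel) + c)"
proof -
  define h where "h x = max (- M) (min M (H x))" for x
  have "(\<lambda>n. \<Sum>k\<le>n. h (znk n k) * fnk n k) \<longlonglongrightarrow> (\<integral>x. h x * phi x \<partial>lborel)"
    using \<open>0 \<le> M\<close> unfolding h_def
    by (intro binomial_sum_tendsto_gaussian_integral[where B = M] continuous_intros cont) auto
  then have lim: "(\<lambda>n. ereal ((\<Sum>k\<le>n. h (znk n k) * fnk n k) + c)) \<longlonglongrightarrow> ereal ((\<integral>x. h x * phi x \<partial>lborel) + c)"
    by (intro tendsto_intros)
  have "\<forall>\<^sub>F n in sequentially. ereal (\<Sum>k\<le>n. H (znk n k) * fnk n k) \<le> ereal ((\<Sum>k\<le>n. h (znk n k) * fnk n k) + c)"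
    using eventually_ge_at_top[of 1]
  proof eventually_elim
    case (elim n)
    have "H x \<le> h x + upper_tail H M x" for x
      using \<open>0 \<le> M\<close> by (auto simp: h_def upper_tail_def)
    then have "(\<Sum>k\<le>n. H (znk n k) * fnk n k) \<le> (\<Sum>k\<le>n. (h (znk n k) + upper_tail H M (znk n k)) * fnk n k)"
      by (intro sum_mono mult_right_mono) (auto simp: fnk_def)
    also have "\<dots> \<le> (\<Sum>k\<le>n. h (znk n k) * fnk n k) + c"
      using tail[OF elim] by (simp add: distrib_right sum.distrib)
    finally show ?case by simp
  qed
  then have "limsup (\<lambda>n. ereal (\<Sum>k\<le>n. H (znk n k) * fnk n k))
      \<le> limsup (\<lambda>n. ereal ((\<Sum>k\<le>n. h (znk n k) * fnk n k) + c))"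
    by (rule Limsup_mono)
  also have "\<dots> = ereal ((\<integral>x. h x * phi x \<partial>lborel) + c)"
    by (rule lim_imp_Limsup[OF _ lim]) simp
  finally show ?thesis by (simp add: h_def)
qed

(* The truncation of H to [-M, M] is handled by the CLT; what it misses above is an upper tail
   sum and what it adds below is a lower tail integral, both small for large M. *)
lemma limsup_binomial_sum_le_gaussian_integral:
  assumes mono: "mono H" and cont: "continuous_on UNIV H" and int: "integrable lborel (\<lambda>x. H x * phi x)"
  shows "limsup (\<lambda>n. ereal (\<Sum>k\<le>n. H (znk n k) * fnk n k)) \<le> ereal (\<integral>x. H x * phi x \<partial>lborel)"
proof (rule ereal_le_epsilon2)
  fix \<delta> :: real assume "0 < \<delta>"
  define R where "R = (\<lambda>u. - H (- u))"
  have "integrable lborel (\<lambda>x. R x * phi x)"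
    using int integrable_reflect_mult_phi[of H] by (simp add: R_def)
  then have "\<forall>\<^sub>F M in at_top. (\<integral>x. upper_tail R M x * phi x \<partial>lborel) < \<delta>/2"
    using \<open>0 < \<delta>\<close> borel_measurable_mono[OF mono_reflect[OF mono]]
    by (intro order_tendstoD(2)[OF upper_tail_integral_tendsto_0]) (auto simp: R_def)
  moreover have "\<forall>\<^sub>F M in at_top. \<forall>n\<ge>1. (\<Sum>k\<le>n. upper_tail H M (znk n k) * fnk n k) < \<delta>/2"
    using \<open>0 < \<delta>\<close> by (intro eventually_upper_tail_sums_less[OF mono int]) simp
  ultimately have "\<forall>\<^sub>F M in at_top. 0 \<le> M \<and> (\<integral>x. upper_tail R M x * phi x \<partial>lborel) < \<delta>/2
      \<and> (\<forall>n\<ge>1. (\<Sum>k\<le>n. upper_tail H M (znk n k) * fnk n k) < \<delta>/2)"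
    using eventually_ge_at_top[of 0] by eventually_elim blast
  then obtain M where M: "0 \<le> M" "(\<integral>x. upper_tail R M x * phi x \<partial>lborel) < \<delta>/2"
      "\<forall>n\<ge>1. (\<Sum>k\<le>n. upper_tail H M (znk n k) * fnk n k) < \<delta>/2"
    unfolding eventually_at_top_linorder by blast
  have "limsup (\<lambda>n. ereal (\<Sum>k\<le>n. H (znk n k) * fnk n k))
      \<le> ereal ((\<integral>x. max (- M) (min M (H x)) * phi x \<partial>lborel) + \<delta>/2)"
    using M(1,3) by (intro limsup_binomial_sum_le_truncation[OF cont]) (auto simp: less_imp_le)
  also have "\<dots> \<le> ereal (\<integral>x. H x * phi x \<partial>lborel) + ereal \<delta>"
    using integral_truncation_le[OF mono int M(1)] M(2) by (simp add: R_def)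
  finally show "limsup (\<lambda>n. ereal (\<Sum>k\<le>n. H (znk n k) * fnk n k)) \<le> ereal (\<integral>x. H x * phi x \<partial>lborel) + ereal \<delta>" .
qed

section \<open>The conjugate of a utility function\<close>

lemma conj_fun_le:
  assumes "\<And>x. 0 < x \<Longrightarrow> U x - x * z \<le> B"
  shows "conj_fun U z \<le> B"
  unfolding conj_fun_def using assms by (intro cSUP_least) auto

context
  fixes U :: "real \<Rightarrow> real"
  assumes U: "utility_function U"
begin

lemma utility_has_real_derivative: "0 < x \<Longrightarrow> (U has_real_derivative deriv U x) (at x)"
  using U unfolding utility_function_def by (metis DERIV_deriv_iff_real_differentiable funpow_0)

lemma utility_concave: "concave_on {0<..} U"
  unfolding concave_on_def
proof (rule convex_onI)
  fix t x y :: real assume t: "0 < t" "t < 1" and xy: "x \<in> {0<..}" "y \<in> {0<..}"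
  have "(1 - t) * U x + t * U y \<le> U ((1 - t) * x + t * y)"
  proof (cases "x = y")
    case False
    have strict: "\<forall>x y t. 0 < x \<longrightarrow> 0 < y \<longrightarrow> x \<noteq> y \<longrightarrow> 0 < t \<longrightarrow> t < 1 \<longrightarrow>
        t * U x + (1 - t) * U y < U (t * x + (1 - t) * y)"
      using U unfolding utility_function_def by blast
    show ?thesis using strict[rule_format, of x y "1 - t"] xy t False by simp
  qed (simp add: algebra_simps)
  then show "- U ((1 - t) *\<^sub>R x + t *\<^sub>R y) \<le> (1 - t) * - U x + t * - U y" by simp
qed simp

lemma utility_le_tangent:
  assumes "0 < x0" "0 < x"
  shows "U x \<le> U x0 + deriv U x0 * (x - x0)"
proof -
  have "((\<lambda>x. - U x) has_real_derivative - deriv U x0) (at x0 within {0<..})"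
    using utility_has_real_derivative[OF assms(1)] by (auto intro: DERIV_minus has_field_derivative_at_within)
  then have "- deriv U x0 * (x - x0) \<le> - U x - - U x0"
    using utility_concave assms unfolding concave_on_def
    by (intro convex_on_imp_above_tangent) (auto simp: interior_open)
  then show ?thesis by (simp add: algebra_simps)
qed

lemma bdd_above_utility_minus_linear:
  assumes "0 < z"
  shows "bdd_above ((\<lambda>x. U x - x * z) ` {0<..})"
proof -
  have "(deriv U \<longlongrightarrow> 0) at_top" using U unfolding utility_function_def by blast
  then have "\<forall>\<^sub>F x in at_top. deriv U x < z" using assms by (rule order_tendstoD)
  then obtain N where "\<And>x. N \<le> x \<Longrightarrow> deriv U x < z"
    by (auto simp: eventually_at_top_linorder)
  then obtain x0 where x0: "0 < x0" "deriv U x0 < z"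
    by (intro that[of "max N 1"]) auto
  have "U x - x * z \<le> U x0 - deriv U x0 * x0" if "0 < x" for x
  proof -
    have "U x - x * z \<le> U x0 + deriv U x0 * (x - x0) - x * z"
      using utility_le_tangent[OF x0(1) that] by simp
    also have "\<dots> = U x0 - deriv U x0 * x0 + x * (deriv U x0 - z)" by (simp add: algebra_simps)
    also have "\<dots> \<le> U x0 - deriv U x0 * x0" using that x0 by (simp add: mult_nonneg_nonpos)
    finally show ?thesis .
  qed
  then show ?thesis by (intro bdd_aboveI2) auto
qed

lemma utility_minus_linear_le_conj_fun: "0 < z \<Longrightarrow> 0 < x \<Longrightarrow> U x - x * z \<le> conj_fun U z"
  unfolding conj_fun_def by (rule cSUP_upper) (auto intro: bdd_above_utility_minus_linear)

lemma conj_fun_antimono: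
  assumes "0 < z1" "z1 \<le> z2"
  shows "conj_fun U z2 \<le> conj_fun U z1"
proof (rule conj_fun_le)
  fix x :: real assume "0 < x"
  then have "U x - x * z2 \<le> U x - x * z1" using assms by (simp add: mult_left_mono)
  also have "\<dots> \<le> conj_fun U z1" using utility_minus_linear_le_conj_fun assms \<open>0 < x\<close> by blast
  finally show "U x - x * z2 \<le> conj_fun U z1" .
qed

lemma convex_on_conj_fun: "convex_on {0<..} (conj_fun U)"
proof (rule convex_onI)
  fix t a b :: real assume t: "0 < t" "t < 1" and ab: "a \<in> {0<..}" "b \<in> {0<..}"
  have "conj_fun U ((1 - t) * a + t * b) \<le> (1 - t) * conj_fun U a + t * conj_fun U b"
  proof (rule conj_fun_le)
    fix x :: real assume "0 < x"
    have "U x - x * ((1 - t) * a + t * b) = (1 - t) * (U x - x * a) + t * (U x - x * b)"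
      by (simp add: algebra_simps)
    also have "\<dots> \<le> (1 - t) * conj_fun U a + t * conj_fun U b"
      using utility_minus_linear_le_conj_fun[of a x] utility_minus_linear_le_conj_fun[of b x] ab t \<open>0 < x\<close>
      by (intro add_mono mult_left_mono) auto
    finally show "U x - x * ((1 - t) * a + t * b) \<le> (1 - t) * conj_fun U a + t * conj_fun U b" .
  qed
  then show "conj_fun U ((1 - t) *\<^sub>R a + t *\<^sub>R b) \<le> (1 - t) * conj_fun U a + t * conj_fun U b"
    by simp
qed simp

lemma continuous_on_conj_fun: "continuous_on {0<..} (conj_fun U)"
  using convex_on_continuous[OF open_greaterThan convex_on_conj_fun] .

end

lemma integrableI_positive_part_bounded_below:
  fixes f g :: "'a \<Rightarrow> real"
  assumes [measurable]: "f \<in> borel_measurable M"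
    and fin: "(\<integral>\<^sup>+ x. ennreal (f x) \<partial>M) < \<infinity>"
    and g: "integrable M g" and below: "\<And>x. x \<in> space M \<Longrightarrow> - g x \<le> f x"
  shows "integrable M f"
proof -
  have "integrable M (\<lambda>x. max 0 (f x))"
    unfolding integrable_iff_bounded using fin by (auto simp: ennreal_max_0)
  moreover have "integrable M (\<lambda>x. min 0 (f x))"
  proof (rule Bochner_Integration.integrable_bound[OF g])
    show "AE x in M. norm (min 0 (f x)) \<le> norm (g x)"
    proof (rule AE_I2)
      fix x assume "x \<in> space M"
      then show "norm (min 0 (f x)) \<le> norm (g x)"
        using below[of x] abs_ge_self[of "g x"] by (auto simp: min_def)
    qed
  qed simp
  ultimately have "integrable M (\<lambda>x. max 0 (f x) + min 0 (f x))" by simp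
  moreover have "(\<lambda>x. max 0 (f x) + min 0 (f x)) = f" by (auto simp: fun_eq_iff)
  ultimately show ?thesis by simp
qed

lemma exp_mult_phi_eq_normal_density: "exp (- x / 2 - 1 / 8) * phi x = normal_density (- 1 / 2) 1 x"
proof -
  have "exp (- x / 2 - 1 / 8) * exp (- (x^2) / 2) = exp (- ((x - (- 1 / 2))^2) / (2 * 1^2))"
    by (simp add: power2_eq_square field_simps flip: exp_add)
  then show ?thesis by (simp add: phi_def normal_density_def)
qed

context
  fixes U :: "real \<Rightarrow> real" and y :: real
  assumes U: "utility_function U" and y: "0 < y"
begin

lemma mono_conj_fun_exp: "mono (\<lambda>x. conj_fun U (y * exp (- x / 2 - 1 / 8)))"
  using y by (intro monoI conj_fun_antimono[OF U]) auto

lemma continuous_on_conj_fun_exp: "continuous_on UNIV (\<lambda>x. conj_fun U (y * exp (- x / 2 - 1 / 8)))"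
  using y by (intro continuous_on_compose2[OF continuous_on_conj_fun[OF U]] continuous_intros) auto

lemma integrable_conj_fun_exp_mult_phi:
  assumes "(\<integral>\<^sup>+ x. ennreal (conj_fun U (y * exp (- x / 2 - 1 / 8)) * phi x) \<partial>lborel) < \<infinity>"
  shows "integrable lborel (\<lambda>x. conj_fun U (y * exp (- x / 2 - 1 / 8)) * phi x)"
proof (rule integrableI_positive_part_bounded_below[OF _ assms])
  show "(\<lambda>x. conj_fun U (y * exp (- x / 2 - 1 / 8)) * phi x) \<in> borel_measurable lborel"
    using borel_measurable_mono[OF mono_conj_fun_exp] unfolding phi_def by measurable
  show "integrable lborel (\<lambda>x. \<bar>U 1\<bar> * phi x + y * (exp (- x / 2 - 1 / 8) * phi x))"
    using integrable_phi unfolding exp_mult_phi_eq_normal_density by simp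
  fix x
  have "U 1 - y * exp (- x / 2 - 1 / 8) \<le> conj_fun U (y * exp (- x / 2 - 1 / 8))"
    using utility_minus_linear_le_conj_fun[OF U, of _ 1] y by simp
  then have "- (\<bar>U 1\<bar> + y * exp (- x / 2 - 1 / 8)) * phi x \<le> conj_fun U (y * exp (- x / 2 - 1 / 8)) * phi x"
    using phi_pos[of x] by (intro mult_right_mono) auto
  then show "- (\<bar>U 1\<bar> * phi x + y * (exp (- x / 2 - 1 / 8) * phi x)) \<le> conj_fun U (y * exp (- x / 2 - 1 / 8)) * phi x"
    by (simp add: algebra_simps)
qed

end

theorem mainTheorem7:
  fixes U :: "real \<Rightarrow> real" and y :: real and H :: "real \<Rightarrow> real"
  assumes "utility_function U"
    and "y > 0"
    and "H = (\<lambda>x. conj_fun U (y * exp (- x / 2 - 1 / 8)))"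
    and "(\<integral>\<^sup>+ x. ennreal (H x * phi x) \<partial>lborel) < \<infinity>"
  shows "(\<forall>\<epsilon>>0. \<exists>M>0. \<forall>n\<ge>1.
            (\<Sum>k\<le>n. (if H (znk n k) > M then H (znk n k) else 0) * fnk n k) < \<epsilon> \<and>
            (\<Sum>k\<le>n. (if H (znk n k) < - M then \<bar>H (znk n k)\<bar> else 0) * fnk n k) < \<epsilon>)
       \<and> limsup (\<lambda>n. ereal (\<Sum>k\<le>n. H (znk n k) * fnk n k))
           \<le> ereal (\<integral> x. H x * phi x \<partial>lborel)"
proof -
  have mono: "mono H" and cont: "continuous_on UNIV H"
    and int: "integrable lborel (\<lambda>x. H x * phi x)"
    using mono_conj_fun_exp continuous_on_conj_fun_exp integrable_conj_fun_exp_mult_phi assms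
    by simp_all
  have "\<exists>M>0. \<forall>n\<ge>1.
      (\<Sum>k\<le>n. upper_tail H M (znk n k) * fnk n k) < \<epsilon> \<and>
      (\<Sum>k\<le>n. (if H (znk n k) < - M then \<bar>H (znk n k)\<bar> else 0) * fnk n k) < \<epsilon>"
    if "0 < \<epsilon>" for \<epsilon>
  proof -
    have "\<forall>\<^sub>F M in at_top. 0 < M \<and> (\<forall>n\<ge>1.
        (\<Sum>k\<le>n. upper_tail H M (znk n k) * fnk n k) < \<epsilon> \<and>
        (\<Sum>k\<le>n. (if H (znk n k) < - M then \<bar>H (znk n k)\<bar> else 0) * fnk n k) < \<epsilon>)"
      using eventually_gt_at_top[of 0] eventually_upper_tail_sums_less[OF mono int that]
        eventually_lower_tail_sums_less[OF mono int that]
      by eventually_elim blast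
    then show ?thesis by (auto dest: eventually_happens'[OF trivial_limit_at_top_linorder])
  qed
  then show ?thesis
    using limsup_binomial_sum_le_gaussian_integral[OF mono cont int] by (simp add: upper_tail_def)
qed

end
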